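(* Let $q$ be a power of an odd prime with $q\equiv1\pmod 4$, $t=\frac{q-1}{4}$, $T$ a generator of $\widehat{\mathbb F_q^{\times}}$, and $\lambda\in\mathbb F_q$ with $\lambda^4=1$. Then $$\frac{3}{q-1}\sum_{j=0}^{q-2}\frac{g(T^{j})^2\,g(T^{2t+j})^2}{g(T^{4j})}\,T^{4j}(4\lambda)=-6q+3q\,T^t(-1).$$
   Context: Characters are extended by $\chi(0)=0$. With $\mathrm{tr}:\mathbb F_q\to\mathbb F_p$ the trace, $\zeta$ a fixed primitive $p$-th root of unity and $\theta(x)=\zeta^{\mathrm{tr}(x)}$, the Gauss sum is $g(\chi)=\sum_{x\in\mathbb F_q}\chi(x)\theta(x)$ (so $g$ of the trivial character is $-1$). *)

theory Defs
  imports "HOL-Computational_Algebra.Computational_Algebra" "HOL-Library.Cardinality" Complex_Main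
begin

definition ff_degree :: "'a::{finite,field} itself \<Rightarrow> nat" where
  "ff_degree t = (THE n. card (UNIV :: 'a set) = semiring_char t ^ n)"

text \<open>Absolute trace F_q \<rightarrow> F_p, valued in the prime subfield of F_q.\<close>
definition ff_trace :: "'a::{finite,field} \<Rightarrow> 'a" where
  "ff_trace x = (\<Sum>i<ff_degree TYPE('a). x ^ (CHAR('a) ^ i))"

text \<open>The trace as a residue in {0..p-1} (identifying F_p with Z/pZ).\<close>
definition ff_trace_nat :: "'a::{finite,field} \<Rightarrow> nat" where
  "ff_trace_nat x = (THE k. k < CHAR('a) \<and> of_nat k = ff_trace x)"

definition add_char :: "complex \<Rightarrow> 'a::{finite,field} \<Rightarrow> complex" where
  "add_char \<zeta> x = \<zeta> ^ ff_trace_nat x"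

definition prim_root_unity :: "nat \<Rightarrow> complex \<Rightarrow> bool" where
  "prim_root_unity p \<zeta> \<longleftrightarrow> \<zeta> ^ p = 1 \<and> (\<forall>k. 0 < k \<and> k < p \<longrightarrow> \<zeta> ^ k \<noteq> 1)"

definition mult_char :: "('a::{finite,field} \<Rightarrow> complex) \<Rightarrow> bool" where
  "mult_char \<chi> \<longleftrightarrow> \<chi> 0 = 0 \<and> \<chi> 1 = 1 \<and>
     (\<forall>x y. x \<noteq> 0 \<longrightarrow> y \<noteq> 0 \<longrightarrow> \<chi> (x * y) = \<chi> x * \<chi> y)"

text \<open>Power chi^j in the character group, extended by 0 at 0 (so chi^0 is the trivial character with value 0 at 0).\<close>
definition char_pow :: "('a::{finite,field} \<Rightarrow> complex) \<Rightarrow> nat \<Rightarrow> 'a \<Rightarrow> complex" where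
  "char_pow \<chi> j x = (if x = 0 then 0 else \<chi> x ^ j)"

definition char_generator :: "('a::{finite,field} \<Rightarrow> complex) \<Rightarrow> bool" where
  "char_generator T \<longleftrightarrow> mult_char T \<and> (\<forall>\<chi>. mult_char \<chi> \<longrightarrow> (\<exists>j. \<chi> = char_pow T j))"

definition gauss_sum :: "complex \<Rightarrow> ('a::{finite,field} \<Rightarrow> complex) \<Rightarrow> complex" where
  "gauss_sum \<zeta> \<chi> = (\<Sum>x\<in>UNIV. \<chi> x * add_char \<zeta> x)"

end

theory Submission
  imports "HOL-Algebra.Algebraic_Closure_Type" "HOL-Number_Theory.Cong" Defs
begin

text \<open>Let \<open>N = q - 1 = 4 t\<close>, \<open>\<chi>\<^sub>j = T\<^sup>j\<close> and \<open>\<phi> = \<chi>\<^sub>2\<^sub>t\<close> the quadratic character.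
  Counting square roots gives \<open>\<psi>(4) J(\<psi>, \<psi>) = J(\<psi>, \<phi>)\<close>, and combined with
  \<open>g(\<chi>) g(\<psi>) = J(\<chi>, \<psi>) g(\<chi>\<psi>)\<close> this yields the duplication formula
  \<open>\<chi>(4) g(\<chi>) g(\<chi>\<phi>) = g(\<phi>) g(\<chi>\<^sup>2)\<close>. Applied to \<open>\<chi>\<^sub>j\<close> and \<open>\<chi>\<^sub>2\<^sub>j\<close>, together with
  \<open>g(\<phi>)\<^sup>2 = q\<close>, it turns the \<open>j\<close>-th summand into \<open>q J(\<chi>\<^sub>2\<^sub>j, \<phi>)\<close> whenever \<open>t\<close> does not divide \<open>j\<close>; the
  four indices \<open>j \<in> {0, t, 2t, 3t}\<close> are evaluated directly and deviate from this by
  \<open>q - q\<^sup>2\<close> for \<open>j = t, 3t\<close>. Orthogonality gives \<open>\<Sum>\<^sub>j J(\<chi>\<^sub>2\<^sub>j, \<phi>) = N \<phi>(2)\<close>, and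
  \<open>\<phi>(2) = T\<^sup>t(-1)\<close> because \<open>(1 + i)\<^sup>2 = 2 i\<close> for a square root \<open>i\<close> of \<open>-1\<close>.\<close>

lemma CHAR_pos_finite_field: "CHAR('a::{finite,field}) > 0"
  by (simp add: finite_imp_CHAR_pos)

lemma prime_CHAR_finite_field: "prime CHAR('a::{finite,field})"
  by (rule prime_CHAR_semidom[OF CHAR_pos_finite_field])

lemma card_finite_field_ge_2: "CARD('a::{finite,field}) \<ge> 2"
proof -
  have "card {0, 1::'a} \<le> CARD('a)" by (intro card_mono) auto
  thus ?thesis by simp
qed

lemma power_eq_power_mod:
  fixes z :: "'b::monoid_mult"
  assumes "z ^ n = 1"
  shows "z ^ m = z ^ (m mod n)"
proof -
  have "z ^ m = z ^ (m mod n + n * (m div n))" by simp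
  also have "\<dots> = z ^ (m mod n)" by (simp only: power_add power_mult assms power_one mult_1_right)
  finally show ?thesis .
qed

lemma of_nat_eq_of_nat_mod_CHAR: "(of_nat m :: 'a::semiring_1_cancel) = of_nat (m mod CHAR('a))"
  by (simp add: of_nat_eq_iff_cong_CHAR cong_def)

lemma sum_UNIV_reindex_inverse:
  fixes g :: "'a::finite \<Rightarrow> 'b::comm_monoid_add"
  assumes "\<And>x. f (h x) = x" "\<And>x. h (f x) = x"
  shows "(\<Sum>x\<in>UNIV. g (f x)) = (\<Sum>x\<in>UNIV. g x)"
  by (rule sum.reindex_bij_witness[of _ h f]) (use assms in auto)

subsection \<open>The cardinality of a finite field\<close>

definition prime_subspace :: "'a::field set \<Rightarrow> bool" where
  "prime_subspace S \<longleftrightarrow> 0 \<in> S \<and> (\<forall>x\<in>S. \<forall>y\<in>S. x + y \<in> S) \<and> (\<forall>x\<in>S. \<forall>k. of_nat k * x \<in> S)"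

lemma of_nat_invertible_CHAR:
  assumes "\<not> CHAR('a::{finite,field}) dvd m"
  obtains k where "(of_nat m :: 'a) * of_nat k = 1"
proof -
  have "coprime m CHAR('a)"
    using assms prime_CHAR_finite_field by (metis coprime_commute prime_imp_coprime)
  moreover have "m \<noteq> 0" using assms by (metis dvd_0_right)
  ultimately obtain k l where "m * k = CHAR('a) * l + 1" using bezout_nat by (metis coprime_iff_gcd_eq_1)
  hence "(of_nat m :: 'a) * of_nat k = 1" by (metis of_nat_1 of_nat_CHAR of_nat_add of_nat_mult mult_zero_left add_0)
  thus thesis by (rule that)
qed

lemma prime_subspace_diff:
  assumes "prime_subspace (S :: 'a::{finite,field} set)" "x \<in> S" "y \<in> S"
  shows "x - y \<in> S"
proof -
  have "(of_nat (CHAR('a) - 1) :: 'a) = - 1"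
    using CHAR_pos_finite_field[where 'a='a] by (simp add: of_nat_diff)
  thus ?thesis using assms unfolding prime_subspace_def by (metis diff_conv_add_uminus mult_minus1)
qed

lemma prime_subspace_extend:
  assumes S: "prime_subspace S"
  shows "prime_subspace {s + of_nat k * v | s k. s \<in> S}"
  unfolding prime_subspace_def
proof (intro conjI ballI allI)
  have "0 = 0 + of_nat 0 * v" by simp
  thus "0 \<in> {s + of_nat k * v | s k. s \<in> S}" using S unfolding prime_subspace_def by blast
next
  fix x y assume "x \<in> {s + of_nat k * v | s k. s \<in> S}" "y \<in> {s + of_nat k * v | s k. s \<in> S}"
  then obtain s k s' k' where "x = s + of_nat k * v" "s \<in> S" "y = s' + of_nat k' * v" "s' \<in> S"
    by blast
  thus "x + y \<in> {s + of_nat k * v | s k. s \<in> S}" using S unfolding prime_subspace_def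
    by (auto intro!: exI[of _ "s + s'"] exI[of _ "k + k'"] simp: algebra_simps)
next
  fix x j assume "x \<in> {s + of_nat k * v | s k. s \<in> S}"
  then obtain s k where "x = s + of_nat k * v" "s \<in> S" by blast
  thus "of_nat j * x \<in> {s + of_nat k * v | s k. s \<in> S}" using S unfolding prime_subspace_def
    by (auto intro!: exI[of _ "of_nat j * s"] exI[of _ "j * k"] simp: algebra_simps)
qed

text \<open>The cosets \<open>S + k v\<close>, \<open>k < p\<close>, are disjoint because \<open>k - k'\<close> is invertible in the prime field.\<close>

lemma inj_on_prime_subspace_cosets:
  fixes S :: "'a::{finite,field} set"
  assumes S: "prime_subspace S" and v: "v \<notin> S"
  shows "inj_on (\<lambda>(s, k). s + of_nat k * v) (S \<times> {..<CHAR('a)})"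
proof (rule inj_onI, clarify)
  let ?p = "CHAR('a)"
  fix s k s' k' assume s: "s \<in> S" "s' \<in> S" and k: "k < ?p" "k' < ?p"
    and eq: "s + of_nat k * v = s' + of_nat k' * v"
  have "k = k'"
  proof (rule ccontr)
    assume "k \<noteq> k'"
    hence "(of_nat k :: 'a) \<noteq> of_nat k'" using k by (simp add: of_nat_eq_iff_cong_CHAR cong_def)
    define d where "d = k + (?p - k')"
    have d: "(of_nat d :: 'a) = of_nat k - of_nat k'" using k by (simp add: d_def of_nat_diff)
    hence "\<not> ?p dvd d"
      using \<open>of_nat k \<noteq> of_nat k'\<close> by (simp add: of_nat_eq_0_iff_char_dvd[symmetric])
    then obtain x where x: "(of_nat d :: 'a) * of_nat x = 1" by (rule of_nat_invertible_CHAR)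
    have "(of_nat d :: 'a) * v = s' - s" unfolding d using eq by (simp add: algebra_simps)
    hence "v = of_nat x * (s' - s)" using x by (metis mult.assoc mult.commute mult_1)
    thus False using S s v prime_subspace_diff unfolding prime_subspace_def by metis
  qed
  thus "s = s' \<and> k = k'" using eq by simp
qed

lemma card_prime_subspace_extend:
  fixes S :: "'a::{finite,field} set"
  assumes S: "prime_subspace S" and v: "v \<notin> S"
  shows "card {s + of_nat k * v | s k. s \<in> S} = CHAR('a) * card S"
proof -
  have "{s + of_nat k * v | s k. s \<in> S} = (\<lambda>(s, k). s + of_nat k * v) ` (S \<times> {..<CHAR('a)})"
  proof (intro equalityI subsetI)
    fix x assume "x \<in> {s + of_nat k * v | s k. s \<in> S}"
    then obtain s k where "x = s + of_nat k * v" "s \<in> S" by blast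
    moreover have "k mod CHAR('a) < CHAR('a)" using CHAR_pos_finite_field[where 'a='a] by simp
    ultimately show "x \<in> (\<lambda>(s, k). s + of_nat k * v) ` (S \<times> {..<CHAR('a)})"
      by (intro image_eqI[of _ _ "(s, k mod CHAR('a))"]) (auto simp flip: of_nat_eq_of_nat_mod_CHAR)
  qed auto
  also have "card \<dots> = card (S \<times> {..<CHAR('a)})"
    by (rule card_image[OF inj_on_prime_subspace_cosets[OF S v]])
  finally show ?thesis by (simp add: card_cartesian_product)
qed

lemma card_finite_field_prime_power: "\<exists>n. CARD('a::{finite,field}) = CHAR('a) ^ n"
proof -
  have "\<exists>n. CARD('a) = CHAR('a) ^ n"
    if "prime_subspace S" "card S = CHAR('a) ^ m" for S :: "'a set" and m
    using that
  proof (induction "CARD('a) - card S" arbitrary: S m rule: less_induct)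
    case less
    show ?case
    proof (cases "S = UNIV")
      case True thus ?thesis using less by auto
    next
      case False
      then obtain v where v: "v \<notin> S" by auto
      define S' where "S' = {s + of_nat k * v | s k. s \<in> S}"
      note S' = prime_subspace_extend[OF less(2), of v, folded S'_def]
        card_prime_subspace_extend[OF less(2) v, folded S'_def]
      have "card S < card S'"
        using S'(2) less(3) prime_gt_1_nat[OF prime_CHAR_finite_field[where 'a='a]] by simp
      moreover have "card S' \<le> CARD('a)" by (rule card_mono) auto
      ultimately have "CARD('a) - card S' < CARD('a) - card S" by linarith
      thus ?thesis using less(1)[of S' "Suc m"] S' less(3) by simp
    qed
  qed
  moreover have "prime_subspace ({0} :: 'a set)" unfolding prime_subspace_def by auto
  moreover have "card ({0} :: 'a set) = CHAR('a) ^ 0" by simp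
  ultimately show ?thesis by blast
qed

lemma card_eq_CHAR_power_ff_degree: "CARD('a::{finite,field}) = CHAR('a) ^ ff_degree TYPE('a)"
proof -
  obtain n where n: "CARD('a) = CHAR('a) ^ n" using card_finite_field_prime_power by blast
  have "ff_degree TYPE('a) = n" unfolding ff_degree_def
  proof (rule the_equality)
    fix m assume "CARD('a) = CHAR('a) ^ m"
    thus "m = n"
      using n prime_gt_1_nat[OF prime_CHAR_finite_field[where 'a='a]] by (simp add: power_inject_exp)
  qed (use n in simp)
  thus ?thesis using n by simp
qed

lemma ff_degree_pos: "ff_degree TYPE('a::{finite,field}) > 0"
  using card_eq_CHAR_power_ff_degree[where 'a='a] card_finite_field_ge_2[where 'a='a]
  by (cases "ff_degree TYPE('a)") auto

lemma finite_field_power_card_minus_1: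
  fixes x :: "'a::{finite,field}"
  assumes "x \<noteq> 0"
  shows "x ^ (CARD('a) - 1) = 1"
proof -
  have "(\<Prod>y\<in>UNIV-{0}. x * y) = x ^ card (UNIV - {0::'a}) * \<Prod>(UNIV-{0::'a})"
    by (simp add: prod.distrib)
  also have "card (UNIV - {0::'a}) = CARD('a) - 1" by (simp add: card_Diff_subset)
  also have "(\<Prod>y\<in>UNIV-{0}. x * y) = \<Prod>(UNIV-{0::'a})"
    by (rule prod.reindex_bij_witness[of _ "\<lambda>y. y / x" "\<lambda>y. x * y"]) (use assms in auto)
  finally show ?thesis by (simp add: prod_zero_iff)
qed

lemma finite_field_power_card:
  fixes x :: "'a::{finite,field}"
  shows "x ^ CARD('a) = x"
  using finite_field_power_card_minus_1[of x] card_finite_field_ge_2[where 'a='a]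
  by (cases "x = 0") (simp_all add: power_eq_if)

subsection \<open>The trace\<close>

lemma ff_trace_add: "ff_trace (x + y :: 'a::{finite,field}) = ff_trace x + ff_trace y"
  unfolding ff_trace_def
  by (simp add: freshmans_dream'[OF prime_CHAR_finite_field refl] sum.distrib)

lemma ff_trace_power_CHAR: "ff_trace (x :: 'a::{finite,field}) ^ CHAR('a) = ff_trace x"
proof -
  let ?p = "CHAR('a)" and ?n = "ff_degree TYPE('a)"
  define f where "f i = x ^ (?p ^ i)" for i
  have "ff_trace x ^ ?p = (\<Sum>i<?n. f (Suc i))"
    unfolding ff_trace_def f_def freshmans_dream_sum[OF prime_CHAR_finite_field refl]
    by (simp add: power_mult[symmetric] mult.commute)
  also have "\<dots> = (\<Sum>i<?n. f i) + f ?n - f 0"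
    using sum.lessThan_Suc_shift[of f ?n] by (simp add: algebra_simps)
  also have "f ?n = f 0"
    using finite_field_power_card[of x] by (simp add: f_def flip: card_eq_CHAR_power_ff_degree)
  finally show ?thesis unfolding ff_trace_def f_def by simp
qed

lemma of_nat_power_CHAR: "(of_nat k :: 'a::{finite,field}) ^ CHAR('a) = of_nat k"
proof (induct k)
  case 0 thus ?case using CHAR_pos_finite_field[where 'a='a] by simp
next
  case (Suc k)
  thus ?case by (simp add: freshmans_dream[OF prime_CHAR_finite_field refl])
qed

text \<open>The roots of \<open>X^p - X\<close> are exactly the elements of the prime field.\<close>

lemma fixed_by_Frobenius_imp_of_nat:
  fixes y :: "'a::{finite,field}"
  assumes "y ^ CHAR('a) = y"
  shows "y \<in> of_nat ` {..<CHAR('a)}"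
proof -
  let ?p = "CHAR('a)"
  have p2: "?p \<ge> 2" using prime_ge_2_nat[OF prime_CHAR_finite_field[where 'a='a]] .
  define P :: "'a poly" where "P = monom 1 ?p - monom 1 1"
  have "coeff P ?p = 1" using p2 by (simp add: P_def)
  hence "P \<noteq> 0" by auto
  moreover have "degree P \<le> ?p"
    unfolding P_def using p2 by (intro degree_diff_le) (auto simp: degree_monom_eq)
  ultimately have card_roots: "card {x. poly P x = 0} \<le> ?p"
    using card_poly_roots_bound order.trans by blast
  have roots: "poly P x = 0 \<longleftrightarrow> x ^ ?p = x" for x by (simp add: P_def poly_monom)
  have "inj_on (of_nat :: nat \<Rightarrow> 'a) {..<?p}"
    by (auto simp: inj_on_def of_nat_eq_iff_cong_CHAR cong_def)
  hence "card (of_nat ` {..<?p} :: 'a set) = ?p" by (simp add: card_image)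
  moreover have sub: "of_nat ` {..<?p} \<subseteq> {x :: 'a. poly P x = 0}"
    by (auto simp: roots of_nat_power_CHAR)
  ultimately have "of_nat ` {..<?p} = {x :: 'a. poly P x = 0}"
    using card_roots card_mono[OF _ sub] by (intro card_subset_eq[OF _ sub]) auto
  thus ?thesis using assms roots by auto
qed

lemma ff_trace_nat:
  fixes x :: "'a::{finite,field}"
  shows "ff_trace_nat x < CHAR('a)" "of_nat (ff_trace_nat x) = ff_trace x"
proof -
  have "\<exists>!k. k < CHAR('a) \<and> of_nat k = ff_trace x"
    using fixed_by_Frobenius_imp_of_nat[OF ff_trace_power_CHAR[of x]]
    by (auto simp: of_nat_eq_iff_cong_CHAR cong_def)
  from theI'[OF this] show "ff_trace_nat x < CHAR('a)" "of_nat (ff_trace_nat x) = ff_trace x"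
    unfolding ff_trace_nat_def by auto
qed

lemma ff_trace_nat_0: "ff_trace_nat (0::'a::{finite,field}) = 0"
proof -
  have "ff_trace (0::'a) = 0"
    using CHAR_pos_finite_field[where 'a='a] by (simp add: ff_trace_def power_0_left)
  thus ?thesis using ff_trace_nat[of "0::'a"]
    by (metis nat_dvd_not_less neq0_conv of_nat_eq_0_iff_char_dvd)
qed

text \<open>The trace is a polynomial of degree \<open>p^(n-1) < q\<close>, so it cannot vanish everywhere.\<close>

lemma ff_trace_not_zero: "\<exists>x::'a::{finite,field}. ff_trace x \<noteq> 0"
proof (rule ccontr)
  assume trace_zero: "\<not> ?thesis"
  let ?p = "CHAR('a)" and ?n = "ff_degree TYPE('a)"
  have p2: "?p \<ge> 2" using prime_ge_2_nat[OF prime_CHAR_finite_field[where 'a='a]] .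
  have n0: "?n > 0" by (rule ff_degree_pos)
  define P :: "'a poly" where "P = (\<Sum>i<?n. monom 1 (?p ^ i))"
  have "coeff P (?p ^ (?n - 1)) = (\<Sum>i<?n. if i = ?n - 1 then 1 else 0)"
    unfolding P_def coeff_sum coeff_monom using p2 by (intro sum.cong refl) (simp add: power_inject_exp)
  hence "P \<noteq> 0" using n0 by auto
  hence "card {x. poly P x = 0} \<le> degree P" by (rule card_poly_roots_bound)
  also have "degree P \<le> ?p ^ (?n - 1)"
    unfolding P_def using p2
    by (intro degree_sum_le) (auto intro: order.trans[OF degree_monom_le] simp: power_increasing)
  also have "\<dots> < ?p ^ ?n" using p2 n0 by (intro power_strict_increasing) auto
  also have "\<dots> = CARD('a)" by (rule card_eq_CHAR_power_ff_degree[symmetric])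
  finally show False
    using trace_zero by (simp add: P_def poly_sum poly_monom ff_trace_def)
qed

subsection \<open>The additive character\<close>

lemma add_char_0: "add_char \<zeta> (0::'a::{finite,field}) = 1"
  by (simp add: add_char_def ff_trace_nat_0)

lemma add_char_add:
  assumes "prim_root_unity CHAR('a::{finite,field}) \<zeta>"
  shows "add_char \<zeta> (x + y :: 'a) = add_char \<zeta> x * add_char \<zeta> y"
proof -
  have "(of_nat (ff_trace_nat (x + y)) :: 'a) = of_nat (ff_trace_nat x + ff_trace_nat y)"
    by (simp add: ff_trace_nat ff_trace_add)
  hence "ff_trace_nat (x + y) mod CHAR('a) = (ff_trace_nat x + ff_trace_nat y) mod CHAR('a)"
    by (simp only: of_nat_eq_iff_cong_CHAR cong_def)
  moreover have "\<zeta> ^ CHAR('a) = 1" using assms by (simp add: prim_root_unity_def)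
  ultimately show ?thesis
    by (metis add_char_def power_add power_eq_power_mod)
qed

lemma sum_add_char:
  assumes prim: "prim_root_unity CHAR('a::{finite,field}) \<zeta>"
  shows "(\<Sum>x\<in>UNIV. add_char \<zeta> (x::'a)) = 0"
proof -
  obtain x0 :: 'a where x0: "ff_trace x0 \<noteq> 0" using ff_trace_not_zero by blast
  hence "0 < ff_trace_nat x0" using ff_trace_nat(2)[of x0] by (metis neq0_conv of_nat_0)
  hence ne: "add_char \<zeta> x0 \<noteq> 1"
    using prim ff_trace_nat(1)[of x0] by (simp add: add_char_def prim_root_unity_def)
  let ?S = "\<Sum>x\<in>UNIV. add_char \<zeta> (x::'a)"
  have "?S = (\<Sum>x\<in>UNIV. add_char \<zeta> (x + x0))"
    by (rule sum_UNIV_reindex_inverse[symmetric, where h="\<lambda>x. x - x0"]) auto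
  also have "\<dots> = add_char \<zeta> x0 * ?S"
    by (simp add: add_char_add[OF prim] sum_distrib_left mult.commute)
  finally have "(1 - add_char \<zeta> x0) * ?S = 0" by (simp add: algebra_simps)
  thus ?thesis using ne by simp
qed

lemma sum_add_char_mult:
  assumes "prim_root_unity CHAR('a::{finite,field}) \<zeta>"
  shows "(\<Sum>x\<in>UNIV. add_char \<zeta> (c * x :: 'a)) = (if c = 0 then of_nat CARD('a) else 0)"
proof (cases "c = 0")
  case False
  have "(\<Sum>x\<in>UNIV. add_char \<zeta> (c * x :: 'a)) = (\<Sum>x\<in>UNIV. add_char \<zeta> (x::'a))"
    using False by (intro sum_UNIV_reindex_inverse[where h="\<lambda>x. x / c"]) auto
  thus ?thesis using sum_add_char[OF assms] False by simp
qed (simp add: add_char_0)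

subsection \<open>Primitive elements\<close>

lemma primitive_element_exists:
  "\<exists>a::'a::{finite,field}. a \<noteq> 0 \<and> (\<forall>x. x \<noteq> 0 \<longrightarrow> (\<exists>i. x = a ^ i))"
proof -
  let ?R = "ring_of_type_algebra :: 'a ring"
  have carrier: "carrier ?R = UNIV" and zero: "\<zero>\<^bsub>?R\<^esub> = 0"
    by (simp_all add: ring_of_type_algebra_def)
  have power: "x [^]\<^bsub>?R\<^esub> (n::nat) = x ^ n" for x :: 'a and n
    by (induct n) (simp_all add: ring_of_type_algebra_def mult.commute)
  have "finite (carrier ?R)" by (simp add: carrier)
  then obtain a where a: "a \<in> carrier (Multiplicative_Group.mult_of ?R)"
    "carrier (Multiplicative_Group.mult_of ?R) = {a [^]\<^bsub>?R\<^esub> i | i::nat. i \<in> UNIV}"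
    using field.finite_field_mult_group_has_gen[OF field_from_type_algebra] by blast
  have "carrier (Multiplicative_Group.mult_of ?R) = UNIV - {0}"
    by (simp only: Multiplicative_Group.carrier_mult_of carrier zero)
  hence "a \<noteq> 0 \<and> (\<forall>x. x \<noteq> 0 \<longrightarrow> (\<exists>i. x = a ^ i))"
    using a unfolding power by blast
  thus ?thesis ..
qed

locale primitive_element =
  fixes a :: "'a::{finite,field}"
  assumes nonzero: "a \<noteq> 0" and generates: "\<And>x. x \<noteq> 0 \<Longrightarrow> \<exists>i. x = a ^ i"
begin

lemma power_mod: "a ^ i = a ^ (i mod (CARD('a) - 1))"
  by (rule power_eq_power_mod[OF finite_field_power_card_minus_1[OF nonzero]])

lemma power_bij: "bij_betw (\<lambda>i. a ^ i) {..<CARD('a) - 1} (UNIV - {0})"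
proof -
  have N: "0 < CARD('a) - 1" using card_finite_field_ge_2[where 'a='a] by simp
  have image: "(\<lambda>i. a ^ i) ` {..<CARD('a) - 1} = UNIV - {0}"
  proof (intro equalityI subsetI)
    fix x :: 'a assume "x \<in> UNIV - {0}"
    then obtain i where "x = a ^ i" using generates by blast
    hence "x = a ^ (i mod (CARD('a) - 1))" using power_mod[of i] by simp
    thus "x \<in> (\<lambda>i. a ^ i) ` {..<CARD('a) - 1}" using N by simp
  qed (use nonzero in auto)
  moreover have "card ((\<lambda>i. a ^ i) ` {..<CARD('a) - 1}) = card {..<CARD('a) - 1}"
    unfolding image by (simp add: card_Diff_subset)
  ultimately show ?thesis unfolding bij_betw_def by (blast intro: eq_card_imp_inj_on)
qed

lemma power_eq_iff: "a ^ m = a ^ n \<longleftrightarrow> m mod (CARD('a) - 1) = n mod (CARD('a) - 1)"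
proof -
  have N: "0 < CARD('a) - 1" using card_finite_field_ge_2[where 'a='a] by simp
  have "a ^ m = a ^ n \<longleftrightarrow> a ^ (m mod (CARD('a) - 1)) = a ^ (n mod (CARD('a) - 1))"
    using power_mod[of m] power_mod[of n] by simp
  also have "\<dots> \<longleftrightarrow> m mod (CARD('a) - 1) = n mod (CARD('a) - 1)"
    using N by (intro inj_on_eq_iff[OF bij_betw_imp_inj_on[OF power_bij]]) auto
  finally show ?thesis .
qed

lemma power_eq_1_iff: "a ^ m = 1 \<longleftrightarrow> (CARD('a) - 1) dvd m"
  using power_eq_iff[of m 0] by (simp add: dvd_eq_mod_eq_0)

lemma sum_UNIV_eq_sum_powers:
  "(\<Sum>x\<in>UNIV. f x) = f 0 + (\<Sum>i<CARD('a) - 1. f (a ^ i))"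
proof -
  have "(\<Sum>x\<in>UNIV. f x) = f 0 + (\<Sum>x\<in>UNIV - {0}. f x)" by (rule sum.remove) auto
  also have "(\<Sum>x\<in>UNIV - {0}. f x) = (\<Sum>i<CARD('a) - 1. f (a ^ i))"
    by (rule sum.reindex_bij_betw[OF power_bij, symmetric])
  finally show ?thesis .
qed

lemma mult_char_with_value:
  assumes "\<omega> ^ (CARD('a) - 1) = 1"
  obtains \<chi> :: "'a \<Rightarrow> complex" where "mult_char \<chi>" "\<chi> a = \<omega>"
proof -
  define dlog where "dlog x = (SOME i. x = a ^ i)" for x
  have dlog: "x = a ^ dlog x" if "x \<noteq> 0" for x
    unfolding dlog_def by (rule someI_ex) (rule generates[OF that])
  have \<omega>_eq: "\<omega> ^ m = \<omega> ^ n" if "a ^ m = a ^ n" for m n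
    using that power_eq_power_mod[OF assms, of m] power_eq_power_mod[OF assms, of n]
    by (simp add: power_eq_iff)
  define \<chi> where "\<chi> x = (if x = 0 then 0 else \<omega> ^ dlog x)" for x
  have "mult_char \<chi>" unfolding mult_char_def
  proof (intro conjI allI impI)
    have "a ^ dlog 1 = a ^ 0" using dlog[of 1] by simp
    thus "\<chi> 1 = 1" using \<omega>_eq[of "dlog 1" 0] unfolding \<chi>_def by simp
  next
    fix x y :: 'a assume "x \<noteq> 0" "y \<noteq> 0"
    moreover from this have "a ^ dlog (x * y) = a ^ (dlog x + dlog y)"
      using dlog[of "x * y"] dlog[of x] dlog[of y] by (simp add: power_add)
    ultimately show "\<chi> (x * y) = \<chi> x * \<chi> y"
      using \<omega>_eq[of "dlog (x * y)" "dlog x + dlog y"] unfolding \<chi>_def by (simp add: power_add)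
  qed (simp add: \<chi>_def)
  moreover have "a ^ dlog a = a ^ 1" using dlog[OF nonzero] by simp
  hence "\<chi> a = \<omega>" using \<omega>_eq[of "dlog a" 1] nonzero unfolding \<chi>_def by simp
  ultimately show thesis by (rule that)
qed

end

subsection \<open>Multiplicative characters\<close>

lemma mult_char_mult: "mult_char \<chi> \<Longrightarrow> \<chi> (x * y) = \<chi> x * \<chi> y"
  unfolding mult_char_def by (cases "x = 0 \<or> y = 0") auto

lemma mult_char_0: "mult_char \<chi> \<Longrightarrow> \<chi> 0 = 0"
  by (simp add: mult_char_def)

lemma mult_char_1: "mult_char \<chi> \<Longrightarrow> \<chi> 1 = 1"
  by (simp add: mult_char_def)

lemma mult_char_minus_1_squared: "mult_char \<chi> \<Longrightarrow> \<chi> (-1) * \<chi> (-1) = 1"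
  using mult_char_mult[of \<chi> "-1" "-1"] by (simp add: mult_char_1)

lemma mult_char_power: "mult_char \<chi> \<Longrightarrow> \<chi> (x ^ n) = \<chi> x ^ n"
  by (induct n) (simp_all add: mult_char_1 mult_char_mult)

lemma mult_char_char_pow: "mult_char \<chi> \<Longrightarrow> mult_char (char_pow \<chi> j)"
  unfolding mult_char_def char_pow_def by (simp add: power_mult_distrib)

lemma char_pow_0 [simp]: "char_pow \<chi> j 0 = 0"
  by (simp add: char_pow_def)

lemma char_pow_mult: "char_pow \<chi> j x * char_pow \<chi> k x = char_pow \<chi> (j + k) x"
  by (simp add: char_pow_def power_add)

lemma char_pow_mult_fun: "(\<lambda>x. char_pow \<chi> j x * char_pow \<chi> k x) = char_pow \<chi> (j + k)"
  by (simp add: char_pow_mult)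

lemma char_pow_mult_exponent: "0 < k \<Longrightarrow> char_pow \<chi> (k * j) x = char_pow \<chi> j x ^ k"
  by (simp add: char_pow_def mult.commute power_mult)

subsection \<open>Gauss and Jacobi sums\<close>

definition jacobi_sum :: "('a::{finite,field} \<Rightarrow> complex) \<Rightarrow> ('a \<Rightarrow> complex) \<Rightarrow> complex" where
  "jacobi_sum \<chi> \<psi> = (\<Sum>x\<in>UNIV. \<chi> x * \<psi> (1 - x))"

text \<open>Substitute \<open>x = s u\<close> for \<open>s \<noteq> 0\<close>.\<close>

lemma sum_mult_char_convolution:
  assumes \<chi>: "mult_char (\<chi> :: 'a::{finite,field} \<Rightarrow> complex)" and \<psi>: "mult_char \<psi>"
  shows "(\<Sum>x\<in>UNIV. \<chi> x * \<psi> (s - x)) =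
    \<chi> s * \<psi> s * jacobi_sum \<chi> \<psi> + (if s = 0 then \<psi> (-1) * (\<Sum>x\<in>UNIV. \<chi> x * \<psi> x) else 0)"
proof (cases "s = 0")
  case True
  have "(\<Sum>x\<in>UNIV. \<chi> x * \<psi> (s - x)) = (\<Sum>x\<in>UNIV. \<psi> (-1) * (\<chi> x * \<psi> x))"
  proof (intro sum.cong refl)
    fix x
    have "\<psi> (- x) = \<psi> (-1) * \<psi> x" using mult_char_mult[OF \<psi>, of "-1" x] by simp
    thus "\<chi> x * \<psi> (s - x) = \<psi> (-1) * (\<chi> x * \<psi> x)" using True by simp
  qed
  thus ?thesis using True mult_char_0[OF \<chi>] by (simp add: sum_distrib_left)
next
  case False
  have "(\<Sum>x\<in>UNIV. \<chi> x * \<psi> (s - x)) = (\<Sum>u\<in>UNIV. \<chi> (s * u) * \<psi> (s - s * u))"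
    using False by (intro sum_UNIV_reindex_inverse[symmetric, where h="\<lambda>x. x / s"]) auto
  also have "\<dots> = (\<Sum>u\<in>UNIV. \<chi> s * \<psi> s * (\<chi> u * \<psi> (1 - u)))"
  proof (intro sum.cong refl)
    fix u
    have "s - s * u = s * (1 - u)" by (simp add: algebra_simps)
    thus "\<chi> (s * u) * \<psi> (s - s * u) = \<chi> s * \<psi> s * (\<chi> u * \<psi> (1 - u))"
      by (simp add: mult_char_mult[OF \<chi>] mult_char_mult[OF \<psi>])
  qed
  finally show ?thesis using False by (simp add: jacobi_sum_def sum_distrib_left)
qed

context
  fixes \<zeta> :: complex
  assumes prim: "prim_root_unity CHAR('a::{finite,field}) \<zeta>"
begin

lemma gauss_sum_mult_expand:
  "gauss_sum \<zeta> (\<chi> :: 'a \<Rightarrow> complex) * gauss_sum \<zeta> \<psi> =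
    (\<Sum>x\<in>UNIV. \<Sum>y\<in>UNIV. \<chi> x * \<psi> y * add_char \<zeta> (x + y))"
  unfolding gauss_sum_def sum_product
  by (intro sum.cong refl) (simp add: add_char_add[OF prim] algebra_simps)

lemma gauss_sum_trivial:
  fixes \<chi> :: "'a \<Rightarrow> complex"
  assumes "\<chi> 0 = 0" "\<And>x. x \<noteq> 0 \<Longrightarrow> \<chi> x = 1"
  shows "gauss_sum \<zeta> \<chi> = -1"
proof -
  have "gauss_sum \<zeta> \<chi> = (\<Sum>x::'a\<in>UNIV. add_char \<zeta> x - (if x = 0 then add_char \<zeta> x else 0))"
    unfolding gauss_sum_def by (intro sum.cong refl) (use assms in auto)
  also have "\<dots> = -1" by (simp add: sum_subtractf sum_add_char[OF prim] add_char_0)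
  finally show ?thesis .
qed

lemma gauss_sum_mult:
  assumes \<chi>: "mult_char (\<chi> :: 'a \<Rightarrow> complex)" and \<psi>: "mult_char \<psi>"
  shows "gauss_sum \<zeta> \<chi> * gauss_sum \<zeta> \<psi> =
    jacobi_sum \<chi> \<psi> * gauss_sum \<zeta> (\<lambda>x. \<chi> x * \<psi> x) + \<psi> (-1) * (\<Sum>x\<in>UNIV. \<chi> x * \<psi> x)"
proof -
  let ?\<theta> = "add_char \<zeta> :: 'a \<Rightarrow> complex"
  have "gauss_sum \<zeta> \<chi> * gauss_sum \<zeta> \<psi> = (\<Sum>x\<in>UNIV. \<Sum>s\<in>UNIV. \<chi> x * \<psi> (s - x) * ?\<theta> s)"
    unfolding gauss_sum_mult_expand
  proof (rule sum.cong[OF refl])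
    fix x
    show "(\<Sum>y\<in>UNIV. \<chi> x * \<psi> y * ?\<theta> (x + y)) = (\<Sum>s\<in>UNIV. \<chi> x * \<psi> (s - x) * ?\<theta> s)"
      using sum_UNIV_reindex_inverse[where f="\<lambda>s. s - x" and h="\<lambda>y. y + x"
          and g="\<lambda>y. \<chi> x * \<psi> y * ?\<theta> (x + y)"] by simp
  qed
  also have "\<dots> = (\<Sum>s\<in>UNIV. ?\<theta> s * (\<Sum>x\<in>UNIV. \<chi> x * \<psi> (s - x)))"
    by (subst sum.swap) (simp add: sum_distrib_left algebra_simps)
  also have "\<dots> = (\<Sum>s\<in>UNIV. ?\<theta> s * (\<chi> s * \<psi> s) * jacobi_sum \<chi> \<psi> +
        (if s = 0 then \<psi> (-1) * (\<Sum>x\<in>UNIV. \<chi> x * \<psi> x) else 0))"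
    by (intro sum.cong refl) (auto simp: sum_mult_char_convolution[OF \<chi> \<psi>] algebra_simps add_char_0)
  also have "\<dots> = jacobi_sum \<chi> \<psi> * gauss_sum \<zeta> (\<lambda>x. \<chi> x * \<psi> x) + \<psi> (-1) * (\<Sum>x\<in>UNIV. \<chi> x * \<psi> x)"
    by (simp add: sum.distrib gauss_sum_def sum_distrib_left sum_distrib_right algebra_simps)
  finally show ?thesis .
qed

lemma gauss_sum_mult_inverse:
  assumes \<chi>: "mult_char (\<chi> :: 'a \<Rightarrow> complex)" and \<psi>: "mult_char \<psi>"
    and inverse: "\<And>x. x \<noteq> 0 \<Longrightarrow> \<chi> x * \<psi> x = 1"
    and nontrivial: "(\<Sum>x\<in>UNIV. \<psi> x) = 0"
  shows "gauss_sum \<zeta> \<chi> * gauss_sum \<zeta> \<psi> = of_nat CARD('a) * \<psi> (-1)"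
proof -
  let ?\<theta> = "add_char \<zeta> :: 'a \<Rightarrow> complex"
  have row: "(\<Sum>y\<in>UNIV. \<chi> x * \<psi> y * ?\<theta> (x + y)) = (\<Sum>z\<in>UNIV. \<psi> z * ?\<theta> ((1 + z) * x))" for x
  proof (cases "x = 0")
    case False
    have "(\<Sum>y\<in>UNIV. \<chi> x * \<psi> y * ?\<theta> (x + y)) = (\<Sum>z\<in>UNIV. \<chi> x * \<psi> (x * z) * ?\<theta> (x + x * z))"
      using False by (intro sum_UNIV_reindex_inverse[symmetric, where h="\<lambda>y. y / x"]) auto
    also have "\<dots> = (\<Sum>z\<in>UNIV. \<psi> z * ?\<theta> ((1 + z) * x))"
      using inverse[OF False] by (intro sum.cong refl) (simp add: mult_char_mult[OF \<psi>] algebra_simps)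
    finally show ?thesis .
  qed (simp add: nontrivial mult_char_0[OF \<chi>] add_char_0)
  have "gauss_sum \<zeta> \<chi> * gauss_sum \<zeta> \<psi> = (\<Sum>z\<in>UNIV. \<psi> z * (\<Sum>x\<in>UNIV. ?\<theta> ((1 + z) * x)))"
    unfolding gauss_sum_mult_expand row by (subst sum.swap) (simp add: sum_distrib_left)
  also have "\<dots> = (\<Sum>z\<in>UNIV. if z = -1 then \<psi> z * of_nat CARD('a) else 0)"
    by (intro sum.cong refl) (auto simp: sum_add_char_mult[OF prim] add_eq_0_iff)
  finally show ?thesis by (simp add: sum.delta')
qed

end

lemma jacobi_sum_trivial:
  fixes \<chi> :: "'a::{finite,field} \<Rightarrow> complex"
  assumes "\<chi> 0 = 0" "\<And>x. x \<noteq> 0 \<Longrightarrow> \<chi> x = 1"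
    and \<psi>: "mult_char \<psi>" and nontrivial: "(\<Sum>x\<in>UNIV. \<psi> x) = 0"
  shows "jacobi_sum \<chi> \<psi> = -1"
proof -
  have "jacobi_sum \<chi> \<psi> = (\<Sum>x\<in>UNIV. \<psi> (1 - x) - (if x = 0 then \<psi> (1 - x) else 0))"
    unfolding jacobi_sum_def by (rule sum.cong[OF refl]) (use assms(1,2) in auto)
  also have "\<dots> = (\<Sum>x\<in>UNIV. \<psi> (1 - x)) - \<psi> 1" by (simp add: sum_subtractf)
  also have "(\<Sum>x\<in>UNIV. \<psi> (1 - x)) = (\<Sum>x\<in>UNIV. \<psi> x)"
    by (rule sum_UNIV_reindex_inverse[where h="\<lambda>x. 1 - x"]) auto
  finally show ?thesis using nontrivial mult_char_1[OF \<psi>] by simp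
qed

lemma sum_square_substitution:
  fixes \<phi> :: "'a::{finite,field} \<Rightarrow> complex"
  assumes square_roots: "\<And>b. of_nat (card {s. s ^ 2 = b}) = 1 + \<phi> b"
  shows "(\<Sum>s\<in>UNIV. f (s ^ 2)) = (\<Sum>b\<in>UNIV. f b * (1 + \<phi> b))"
proof -
  have "(\<Sum>s\<in>UNIV. f (s ^ 2)) = (\<Sum>b\<in>UNIV. \<Sum>s\<in>{s \<in> UNIV. s ^ 2 = b}. f (s ^ 2))"
    by (rule sum.group[symmetric]) auto
  also have "\<dots> = (\<Sum>b\<in>UNIV. f b * (1 + \<phi> b))"
    by (intro sum.cong refl) (simp add: square_roots[symmetric] mult.commute)
  finally show ?thesis .
qed

text \<open>If \<open>\<phi> b + 1\<close> counts the square roots of \<open>b\<close>, then substituting \<open>s = 2 x - 1\<close> in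
  \<open>\<psi>(4 x (1 - x)) = \<psi>(1 - s\<^sup>2)\<close> turns \<open>J(\<psi>, \<psi>)\<close> into \<open>J(\<psi>, \<phi>)\<close>.\<close>

lemma jacobi_sum_duplication:
  fixes \<phi> \<psi> :: "'a::{finite,field} \<Rightarrow> complex"
  assumes square_roots: "\<And>b. of_nat (card {s. s ^ 2 = b}) = 1 + \<phi> b"
    and two: "(2::'a) \<noteq> 0"
    and \<psi>: "mult_char \<psi>" and nontrivial: "(\<Sum>x\<in>UNIV. \<psi> x) = 0"
  shows "\<psi> 4 * jacobi_sum \<psi> \<psi> = jacobi_sum \<psi> \<phi>"
proof -
  have "\<psi> 4 * jacobi_sum \<psi> \<psi> = (\<Sum>x\<in>UNIV. \<psi> (1 - (2 * x - 1) ^ 2))"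
    unfolding jacobi_sum_def sum_distrib_left
  proof (intro sum.cong refl)
    fix x :: 'a
    have "1 - (2 * x - 1) ^ 2 = 4 * (x * (1 - x))" by (simp add: algebra_simps power2_eq_square)
    thus "\<psi> 4 * (\<psi> x * \<psi> (1 - x)) = \<psi> (1 - (2 * x - 1) ^ 2)" by (simp add: mult_char_mult[OF \<psi>])
  qed
  also have "\<dots> = (\<Sum>s\<in>UNIV. \<psi> (1 - s ^ 2))"
    using two by (intro sum_UNIV_reindex_inverse[where h="\<lambda>s. (s + 1) / 2"]) (auto simp: field_simps)
  also have "\<dots> = (\<Sum>b\<in>UNIV. \<psi> (1 - b) * (1 + \<phi> b))"
    by (rule sum_square_substitution[OF square_roots])
  also have "\<dots> = (\<Sum>b\<in>UNIV. \<psi> (1 - b)) + (\<Sum>b\<in>UNIV. \<psi> (1 - b) * \<phi> b)"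
    by (simp add: distrib_left sum.distrib)
  also have "(\<Sum>b\<in>UNIV. \<psi> (1 - b)) = 0"
    using nontrivial sum_UNIV_reindex_inverse[where f="\<lambda>b. 1 - b" and h="\<lambda>b. 1 - b" and g=\<psi>] by simp
  also have "(\<Sum>b\<in>UNIV. \<psi> (1 - b) * \<phi> b) = jacobi_sum \<psi> \<phi>"
    unfolding jacobi_sum_def using sum_UNIV_reindex_inverse[where f="\<lambda>b. 1 - b" and h="\<lambda>b. 1 - b"
      and g="\<lambda>x. \<psi> x * \<phi> (1 - x)"] by simp
  finally show ?thesis by simp
qed

subsection \<open>The characters generated by \<open>T\<close>\<close>

locale generated_characters =
  fixes T :: "'a::{finite,field} \<Rightarrow> complex" and \<zeta> :: complex
  assumes prim: "prim_root_unity CHAR('a) \<zeta>" and generator: "char_generator T"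
begin

abbreviation \<chi> :: "nat \<Rightarrow> 'a \<Rightarrow> complex" where "\<chi> j \<equiv> char_pow T j"

definition \<alpha> :: 'a where "\<alpha> = (SOME a. primitive_element a)"

sublocale \<alpha>: primitive_element \<alpha>
proof -
  obtain a :: 'a where "primitive_element a"
    using primitive_element_exists unfolding primitive_element_def by blast
  thus "primitive_element \<alpha>" unfolding \<alpha>_def by (rule someI)
qed

definition \<omega> :: complex where "\<omega> = T \<alpha>"

lemma card_minus_1_pos: "CARD('a) - 1 > 0"
  using card_finite_field_ge_2[where 'a='a] by simp

lemma mult_char_T: "mult_char T"
  using generator by (simp add: char_generator_def)

lemma mult_char_\<chi>: "mult_char (\<chi> j)"
  by (rule mult_char_char_pow[OF mult_char_T])

lemma T_power_card_minus_1: "x \<noteq> 0 \<Longrightarrow> T x ^ (CARD('a) - 1) = 1"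
  using mult_char_power[OF mult_char_T, of x "CARD('a) - 1"] finite_field_power_card_minus_1[of x]
  by (simp add: mult_char_1[OF mult_char_T])

lemma \<chi>_\<alpha>_power: "\<chi> j (\<alpha> ^ i) = \<omega> ^ (i * j)"
  using \<alpha>.nonzero by (simp add: char_pow_def \<omega>_def mult_char_power[OF mult_char_T] power_mult)

text \<open>Since \<open>T\<close> generates all characters, some power of \<open>\<omega> = T \<alpha>\<close> is a primitive
  \<open>(CARD('a) - 1)\<close>-th root of unity; hence so is \<open>\<omega>\<close>.\<close>

lemma \<omega>_power_eq_1_iff: "\<omega> ^ k = 1 \<longleftrightarrow> (CARD('a) - 1) dvd k"
proof
  define \<omega>\<^sub>0 where "\<omega>\<^sub>0 = cis (2 * pi / real (CARD('a) - 1))"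
  have \<omega>\<^sub>0_power: "\<omega>\<^sub>0 ^ k = cis (2 * pi * real k / real (CARD('a) - 1))" for k
    by (simp add: \<omega>\<^sub>0_def DeMoivre mult_ac)
  have "\<omega>\<^sub>0 ^ (CARD('a) - 1) = 1" using card_minus_1_pos by (simp add: \<omega>\<^sub>0_power complex_eq_iff)
  then obtain \<psi> where \<psi>: "mult_char \<psi>" "\<psi> \<alpha> = \<omega>\<^sub>0" by (rule \<alpha>.mult_char_with_value)
  then obtain j where "\<psi> = \<chi> j" using generator unfolding char_generator_def by blast
  hence \<omega>\<^sub>0_eq: "\<omega>\<^sub>0 = \<omega> ^ j" using \<psi>(2) \<chi>_\<alpha>_power[of j 1] by simp
  assume "\<omega> ^ k = 1"
  have "\<omega>\<^sub>0 ^ k = (\<omega> ^ k) ^ j" unfolding \<omega>\<^sub>0_eq by (simp only: mult.commute flip: power_mult)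
  hence "\<omega>\<^sub>0 ^ (k mod (CARD('a) - 1)) = \<omega>\<^sub>0 ^ 0"
    using \<open>\<omega> ^ k = 1\<close> power_eq_power_mod[OF \<open>\<omega>\<^sub>0 ^ (CARD('a) - 1) = 1\<close>, of k] by simp
  hence "k mod (CARD('a) - 1) = 0"
    using inj_onD[OF bij_betw_imp_inj_on[OF bij_betw_roots_unity[OF card_minus_1_pos]]] card_minus_1_pos
    by (simp add: \<omega>\<^sub>0_power)
  thus "(CARD('a) - 1) dvd k" by auto
next
  assume "(CARD('a) - 1) dvd k"
  thus "\<omega> ^ k = 1"
    using T_power_card_minus_1[OF \<alpha>.nonzero] by (auto simp: \<omega>_def power_mult elim!: dvdE)
qed

lemma T_eq_1_iff: "x \<noteq> 0 \<Longrightarrow> T x = 1 \<longleftrightarrow> x = 1"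
proof
  assume "x \<noteq> 0" "T x = 1"
  then obtain i where "x = \<alpha> ^ i" using \<alpha>.generates by blast
  moreover from this have "\<omega> ^ i = 1"
    using \<open>T x = 1\<close> by (simp add: \<omega>_def mult_char_power[OF mult_char_T])
  ultimately show "x = 1" using \<omega>_power_eq_1_iff \<alpha>.power_eq_1_iff by simp
qed (simp add: mult_char_1[OF mult_char_T])

lemma \<chi>_mod:
  assumes "j mod (CARD('a) - 1) = k mod (CARD('a) - 1)"
  shows "\<chi> j = \<chi> k"
proof
  fix x :: 'a
  show "\<chi> j x = \<chi> k x"
  proof (cases "x = 0")
    case False
    with assms show ?thesis
      using power_eq_power_mod[OF T_power_card_minus_1[OF False], of j]
        power_eq_power_mod[OF T_power_card_minus_1[OF False], of k]
      by (simp add: char_pow_def)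
  qed (simp add: char_pow_def)
qed

lemma \<chi>_trivial: "(CARD('a) - 1) dvd j \<Longrightarrow> x \<noteq> 0 \<Longrightarrow> \<chi> j x = 1"
  using \<chi>_mod[of j 0] by (simp add: char_pow_def)

lemma sum_\<chi>: "(\<Sum>x\<in>UNIV. \<chi> j x) = (if (CARD('a) - 1) dvd j then of_nat (CARD('a) - 1) else 0)"
proof -
  have "(\<Sum>x\<in>UNIV. \<chi> j x) = (\<Sum>i<CARD('a) - 1. (\<omega> ^ j) ^ i)"
    by (simp add: \<alpha>.sum_UNIV_eq_sum_powers \<chi>_\<alpha>_power mult.commute flip: power_mult)
  also have "\<dots> = (if (CARD('a) - 1) dvd j then of_nat (CARD('a) - 1) else 0)"
  proof (cases "(CARD('a) - 1) dvd j")
    case False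
    hence "\<omega> ^ j \<noteq> 1" using \<omega>_power_eq_1_iff by simp
    moreover have "(\<omega> ^ j) ^ (CARD('a) - 1) = 1"
      by (simp add: \<omega>_power_eq_1_iff flip: power_mult)
    ultimately show ?thesis using False by (simp add: geometric_sum)
  next
    case True
    hence "\<omega> ^ j = 1" using \<omega>_power_eq_1_iff by simp
    thus ?thesis using True by simp
  qed
  finally show ?thesis .
qed

lemma sum_\<chi>_over_exponents: "(\<Sum>j<CARD('a) - 1. \<chi> j x) = (if x = 1 then of_nat (CARD('a) - 1) else 0)"
proof (cases "x = 0")
  case False
  show ?thesis
  proof (cases "x = 1")
    case False
    hence "T x \<noteq> 1" using T_eq_1_iff \<open>x \<noteq> 0\<close> by simp
    thus ?thesis using False \<open>x \<noteq> 0\<close> T_power_card_minus_1[OF \<open>x \<noteq> 0\<close>]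
      by (simp add: char_pow_def geometric_sum)
  qed (simp add: char_pow_def mult_char_1[OF mult_char_T])
qed (simp add: char_pow_def)

lemma gauss_sum_\<chi>_trivial: "(CARD('a) - 1) dvd j \<Longrightarrow> gauss_sum \<zeta> (\<chi> j) = -1"
  by (rule gauss_sum_trivial[OF prim]) (simp_all add: \<chi>_trivial)

lemma gauss_sum_\<chi>_mult:
  "\<not> (CARD('a) - 1) dvd (j + k) \<Longrightarrow>
    gauss_sum \<zeta> (\<chi> j) * gauss_sum \<zeta> (\<chi> k) = jacobi_sum (\<chi> j) (\<chi> k) * gauss_sum \<zeta> (\<chi> (j + k))"
  using gauss_sum_mult[OF prim mult_char_\<chi> mult_char_\<chi>, of j k] sum_\<chi>[of "j + k"]
  by (simp add: char_pow_mult)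

lemma gauss_sum_\<chi>_inverse:
  assumes "(CARD('a) - 1) dvd (j + k)" "\<not> (CARD('a) - 1) dvd k"
  shows "gauss_sum \<zeta> (\<chi> j) * gauss_sum \<zeta> (\<chi> k) = of_nat CARD('a) * \<chi> k (-1)"
proof (rule gauss_sum_mult_inverse[OF prim mult_char_\<chi> mult_char_\<chi>])
  show "\<chi> j x * \<chi> k x = 1" if "x \<noteq> 0" for x
    using char_pow_mult[of T j x k] \<chi>_trivial[OF assms(1) that] by simp
qed (use sum_\<chi>[of k] assms(2) in simp)

lemma gauss_sum_\<chi>_nonzero: "gauss_sum \<zeta> (\<chi> j) \<noteq> 0"
proof (cases "(CARD('a) - 1) dvd j")
  case False
  define N where "N = CARD('a) - 1"
  define k where "k = N - j mod N"
  have "0 < j mod N" "j mod N < N"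
    using False card_minus_1_pos by (simp_all add: N_def dvd_eq_mod_eq_0)
  hence "j + k = j div N * N + N" "0 < k" "k < N"
    unfolding k_def using div_mult_mod_eq[of j N] by linarith+
  hence "N dvd (j + k)" "\<not> N dvd k" by (auto dest: dvd_imp_le)
  hence "gauss_sum \<zeta> (\<chi> j) * gauss_sum \<zeta> (\<chi> k) \<noteq> 0"
    using gauss_sum_\<chi>_inverse[of j k, folded N_def] mult_char_minus_1_squared[OF mult_char_\<chi>, of k]
    by auto
  thus ?thesis by auto
qed (simp add: gauss_sum_\<chi>_trivial)

end

subsection \<open>The case \<open>q \<equiv> 1 (mod 4)\<close>\<close>

locale quartic_characters = generated_characters +
  fixes t :: nat
  assumes odd_char: "odd CHAR('a)" and card_mod_4: "CARD('a) mod 4 = 1"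
    and t_def: "t = (CARD('a) - 1) div 4"
begin

abbreviation \<phi> :: "'a \<Rightarrow> complex" where "\<phi> \<equiv> \<chi> (2 * t)"

lemma card_minus_1_eq: "CARD('a) - 1 = 4 * t"
  using card_mod_4 t_def by presburger

lemma t_pos: "0 < t"
  using card_minus_1_eq card_minus_1_pos by simp

lemma two_nonzero: "(2::'a) \<noteq> 0"
proof
  assume "(2::'a) = 0"
  hence "CHAR('a) dvd 2" using of_nat_eq_0_iff_char_dvd[where 'a='a, of 2] by simp
  hence "CHAR('a) \<le> 2" by (rule dvd_imp_le) simp
  moreover have "CHAR('a) \<ge> 2" using prime_ge_2_nat[OF prime_CHAR_finite_field[where 'a='a]] .
  ultimately show False using odd_char by simp
qed

lemma \<omega>_power_2t: "\<omega> ^ (2 * t) = -1"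
proof -
  have "(\<omega> ^ (2 * t)) ^ 2 = 1"
    using T_power_card_minus_1[OF \<alpha>.nonzero] card_minus_1_eq by (simp add: \<omega>_def flip: power_mult)
  moreover have "\<omega> ^ (2 * t) \<noteq> 1"
    using \<omega>_power_eq_1_iff[of "2 * t"] card_minus_1_eq t_pos by (auto dest: dvd_imp_le)
  ultimately show ?thesis by (simp add: power2_eq_1_iff)
qed

lemma \<alpha>_power_2t: "\<alpha> ^ (2 * t) = -1"
proof -
  have "(\<alpha> ^ (2 * t)) ^ 2 = 1"
    using finite_field_power_card_minus_1[OF \<alpha>.nonzero] card_minus_1_eq by (simp flip: power_mult)
  moreover have "\<alpha> ^ (2 * t) \<noteq> 1"
    using \<alpha>.power_eq_1_iff[of "2 * t"] card_minus_1_eq t_pos by (auto dest: dvd_imp_le)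
  ultimately show ?thesis by (simp add: power2_eq_1_iff)
qed

lemma \<phi>_\<alpha>_power: "\<phi> (\<alpha> ^ i) = (-1) ^ i"
proof -
  have "\<phi> (\<alpha> ^ i) = (\<omega> ^ (2 * t)) ^ i" by (simp add: \<chi>_\<alpha>_power mult.commute flip: power_mult)
  thus ?thesis by (simp add: \<omega>_power_2t)
qed

lemma \<phi>_minus_1: "\<phi> (-1) = 1"
  using mult_char_minus_1_squared[OF mult_char_T] by (simp add: char_pow_def power_mult power2_eq_square)

lemma sum_\<phi>: "(\<Sum>x\<in>UNIV. \<phi> x) = 0"
  using sum_\<chi>[of "2 * t"] card_minus_1_eq t_pos by (auto dest: dvd_imp_le)

text \<open>\<open>\<phi>\<close> is the quadratic character: it is \<open>1\<close> on even and \<open>-1\<close> on odd powers of \<open>\<alpha>\<close>.\<close>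

lemma card_square_roots: "of_nat (card {s::'a. s ^ 2 = b}) = 1 + \<phi> b"
proof (cases "b = 0")
  case False
  then obtain i where i: "b = \<alpha> ^ i" using \<alpha>.generates by blast
  show ?thesis
  proof (cases "even i")
    case True
    then obtain k where "i = 2 * k" by (rule evenE)
    define c where "c = \<alpha> ^ k"
    have c: "c ^ 2 = b" "c \<noteq> 0"
      using \<open>i = 2 * k\<close> i \<alpha>.nonzero by (simp_all add: c_def mult.commute flip: power_mult)
    have "{s. s ^ 2 = b} = {c, -c}"
      unfolding c(1)[symmetric] power2_eq_iff by auto
    moreover have "c \<noteq> -c"
    proof
      assume "c = -c"
      hence "2 * c = 0" by (metis add.right_inverse mult_2)
      thus False using c(2) two_nonzero by simp
    qed
    ultimately show ?thesis using True i by (simp add: \<phi>_\<alpha>_power)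
  next
    case False
    have "{s. s ^ 2 = b} = {}"
    proof (intro equals0I)
      fix s assume s: "s \<in> {s. s ^ 2 = b}"
      hence "s \<noteq> 0" using \<open>b \<noteq> 0\<close> by auto
      then obtain m where "s = \<alpha> ^ m" using \<alpha>.generates by blast
      hence "\<alpha> ^ (2 * m) = \<alpha> ^ i" using s i by (simp add: mult.commute flip: power_mult)
      hence "(2 * m) mod (4 * t) = i mod (4 * t)" using \<alpha>.power_eq_iff card_minus_1_eq by simp
      hence "(2 * m) mod (4 * t) mod 2 = i mod (4 * t) mod 2" by simp
      moreover have "(2::nat) dvd 4 * t" by simp
      ultimately show False using False by (simp add: mod_mod_cancel even_iff_mod_2_eq_zero)
    qed
    thus ?thesis using False i by (simp add: \<phi>_\<alpha>_power)
  qed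
qed (simp add: power2_eq_square)

lemma not_dvd_2t: "\<not> (CARD('a) - 1) dvd (2 * t)"
  using card_minus_1_eq t_pos by (auto dest: dvd_imp_le)

lemma gauss_sum_\<phi>_squared: "gauss_sum \<zeta> \<phi> ^ 2 = of_nat CARD('a)"
proof -
  have "(CARD('a) - 1) dvd (2 * t + 2 * t)" using card_minus_1_eq by simp
  from gauss_sum_\<chi>_inverse[OF this not_dvd_2t] show ?thesis
    by (simp add: power2_eq_square \<phi>_minus_1)
qed

lemma jacobi_sum_\<phi>_\<phi>: "jacobi_sum \<phi> \<phi> = -1"
proof -
  have four_t: "2 * t + 2 * t = 4 * t" by simp
  have "of_nat CARD('a) = jacobi_sum \<phi> \<phi> * gauss_sum \<zeta> (\<chi> (4 * t)) + \<phi> (-1) * (\<Sum>x\<in>UNIV. \<chi> (4 * t) x)"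
    using gauss_sum_mult[OF prim mult_char_\<chi> mult_char_\<chi>, of "2 * t" "2 * t"] gauss_sum_\<phi>_squared
    unfolding char_pow_mult_fun char_pow_mult four_t by (simp add: power2_eq_square)
  also have "\<dots> = - jacobi_sum \<phi> \<phi> + of_nat (CARD('a) - 1)"
    using card_minus_1_eq by (simp add: gauss_sum_\<chi>_trivial sum_\<chi> \<phi>_minus_1)
  also have "of_nat (CARD('a) - 1) = (of_nat CARD('a) - 1 :: complex)"
    using card_minus_1_pos by (simp add: of_nat_diff)
  finally show ?thesis by (simp add: algebra_simps add_eq_0_iff)
qed

lemma jacobi_sum_\<chi>_\<phi>_trivial: "(CARD('a) - 1) dvd j \<Longrightarrow> jacobi_sum (\<chi> j) \<phi> = -1"
  by (rule jacobi_sum_trivial[OF _ _ mult_char_\<chi> sum_\<phi>]) (simp_all add: \<chi>_trivial)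

lemma jacobi_sum_at_multiple_of_t:
  assumes "t dvd j"
  shows "jacobi_sum (\<chi> (2 * j)) \<phi> = -1"
proof -
  obtain m where m: "j = t * m" using assms ..
  show ?thesis
  proof (cases "even m")
    case True
    then obtain k where "m = 2 * k" ..
    hence "2 * j = (4 * t) * k" using m by simp
    hence "(CARD('a) - 1) dvd 2 * j" using card_minus_1_eq by simp
    thus ?thesis by (rule jacobi_sum_\<chi>_\<phi>_trivial)
  next
    case False
    then obtain k where "m = 2 * k + 1" ..
    hence "2 * j = 2 * t + k * (4 * t)" using m by (simp add: algebra_simps)
    hence "2 * j mod (CARD('a) - 1) = 2 * t mod (CARD('a) - 1)" using card_minus_1_eq by simp
    thus ?thesis using jacobi_sum_\<phi>_\<phi> \<chi>_mod by metis
  qed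
qed

lemma not_dvd_of_not_2t_dvd:
  assumes "\<not> (2 * t) dvd j"
  shows "\<not> (CARD('a) - 1) dvd j" "\<not> (CARD('a) - 1) dvd 2 * j" "\<not> (CARD('a) - 1) dvd j + 2 * t"
proof -
  have "CARD('a) - 1 = 2 * t * 2" using card_minus_1_eq by simp
  hence two_t: "2 * t dvd CARD('a) - 1" by (metis dvd_triv_left)
  thus "\<not> (CARD('a) - 1) dvd j" using assms dvd_trans by blast
  show "\<not> (CARD('a) - 1) dvd 2 * j"
    using assms card_minus_1_eq by (simp add: nat_mult_dvd_cancel_disj[of 2 "2 * t", simplified])
  show "\<not> (CARD('a) - 1) dvd j + 2 * t"
    using assms two_t by (metis dvd_add_left_iff dvd_refl dvd_trans)
qed

lemma gauss_sum_\<chi>_squared: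
  assumes "\<not> (2 * t) dvd j"
  shows "\<chi> j 4 * gauss_sum \<zeta> (\<chi> j) ^ 2 = jacobi_sum (\<chi> j) \<phi> * gauss_sum \<zeta> (\<chi> (2 * j))"
proof -
  note not_dvd = not_dvd_of_not_2t_dvd[OF assms]
  have "\<chi> j 4 * gauss_sum \<zeta> (\<chi> j) ^ 2 = (\<chi> j 4 * jacobi_sum (\<chi> j) (\<chi> j)) * gauss_sum \<zeta> (\<chi> (2 * j))"
    using gauss_sum_\<chi>_mult[of j j] not_dvd(2) by (simp add: power2_eq_square mult_2 mult.assoc)
  also have "\<chi> j 4 * jacobi_sum (\<chi> j) (\<chi> j) = jacobi_sum (\<chi> j) \<phi>"
    by (rule jacobi_sum_duplication[OF card_square_roots two_nonzero mult_char_\<chi>])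
      (use not_dvd(1) in \<open>simp add: sum_\<chi>\<close>)
  finally show ?thesis .
qed

text \<open>The case \<open>m = 2\<close> of the Hasse--Davenport product formula.\<close>

lemma gauss_sum_duplication:
  assumes "\<not> (2 * t) dvd j"
  shows "\<chi> j 4 * gauss_sum \<zeta> (\<chi> j) * gauss_sum \<zeta> (\<chi> (2 * t + j)) = gauss_sum \<zeta> \<phi> * gauss_sum \<zeta> (\<chi> (2 * j))"
proof -
  let ?g = "gauss_sum \<zeta>"
  have shift: "?g (\<chi> j) * ?g \<phi> = jacobi_sum (\<chi> j) \<phi> * ?g (\<chi> (2 * t + j))"
    using gauss_sum_\<chi>_mult[of j "2 * t"] not_dvd_of_not_2t_dvd(3)[OF assms] by (simp add: add.commute)
  have "?g (\<chi> j) * (\<chi> j 4 * ?g (\<chi> j) * ?g (\<chi> (2 * t + j))) = (\<chi> j 4 * ?g (\<chi> j) ^ 2) * ?g (\<chi> (2 * t + j))"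
    by (simp add: power2_eq_square mult_ac)
  also have "\<dots> = ?g (\<chi> j) * (?g \<phi> * ?g (\<chi> (2 * j)))"
    unfolding gauss_sum_\<chi>_squared[OF assms] using shift by (simp add: mult_ac)
  finally show ?thesis using gauss_sum_\<chi>_nonzero[of j] by simp
qed

definition gauss_quotient :: "'a \<Rightarrow> nat \<Rightarrow> complex" where
  "gauss_quotient lam j = gauss_sum \<zeta> (\<chi> j) ^ 2 * gauss_sum \<zeta> (\<chi> (2 * t + j)) ^ 2
      / gauss_sum \<zeta> (\<chi> (4 * j)) * \<chi> (4 * j) (4 * lam)"

lemma \<chi>_4j_at_4lam:
  assumes "lam ^ 4 = 1"
  shows "\<chi> (4 * j) (4 * lam) = \<chi> j 4 ^ 4"
proof -
  have "\<chi> (4 * j) lam = \<chi> j (lam ^ 4)"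
    by (simp add: char_pow_mult_exponent mult_char_power[OF mult_char_\<chi>])
  hence "\<chi> (4 * j) lam = 1" using assms by (simp add: mult_char_1[OF mult_char_\<chi>])
  thus ?thesis by (simp add: mult_char_mult[OF mult_char_\<chi>] char_pow_mult_exponent)
qed

lemma gauss_quotient_generic:
  assumes "lam ^ 4 = 1" "\<not> t dvd j"
  shows "gauss_quotient lam j = of_nat CARD('a) * jacobi_sum (\<chi> (2 * j)) \<phi>"
proof -
  let ?c = "\<chi> j 4" and ?g = "gauss_sum \<zeta>"
  have not_dvd: "\<not> 2 * t dvd j" "\<not> 2 * t dvd 2 * j" using assms(2) by (auto intro: dvd_mult_left)
  have "?g (\<chi> j) ^ 2 * ?g (\<chi> (2 * t + j)) ^ 2 * ?c ^ 4
      = (?c * ?g (\<chi> j) * ?g (\<chi> (2 * t + j))) ^ 2 * ?c ^ 2"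
    by (simp add: power2_eq_square eval_nat_numeral)
  also have "\<dots> = ?g \<phi> ^ 2 * (?c ^ 2 * ?g (\<chi> (2 * j)) ^ 2)"
    unfolding gauss_sum_duplication[OF not_dvd(1)] by (simp add: power_mult_distrib mult_ac)
  also have "?c ^ 2 = \<chi> (2 * j) 4" by (simp add: char_pow_mult_exponent)
  also have "\<chi> (2 * j) 4 * ?g (\<chi> (2 * j)) ^ 2 = jacobi_sum (\<chi> (2 * j)) \<phi> * ?g (\<chi> (2 * (2 * j)))"
    by (rule gauss_sum_\<chi>_squared[OF not_dvd(2)])
  finally have "?g (\<chi> j) ^ 2 * ?g (\<chi> (2 * t + j)) ^ 2 * ?c ^ 4
      = of_nat CARD('a) * jacobi_sum (\<chi> (2 * j)) \<phi> * ?g (\<chi> (4 * j))"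
    by (simp add: gauss_sum_\<phi>_squared)
  thus ?thesis
    using gauss_sum_\<chi>_nonzero[of "4 * j"]
    by (simp add: gauss_quotient_def \<chi>_4j_at_4lam[OF assms(1)])
qed

lemma gauss_sum_t_3t: "gauss_sum \<zeta> (\<chi> t) ^ 2 * gauss_sum \<zeta> (\<chi> (3 * t)) ^ 2 = of_nat CARD('a) ^ 2"
proof -
  have "(CARD('a) - 1) dvd (t + 3 * t)" "\<not> (CARD('a) - 1) dvd (3 * t)"
    using card_minus_1_eq t_pos by (auto dest: dvd_imp_le)
  from gauss_sum_\<chi>_inverse[OF this]
  have "(gauss_sum \<zeta> (\<chi> t) * gauss_sum \<zeta> (\<chi> (3 * t))) ^ 2
      = of_nat CARD('a) ^ 2 * (\<chi> (3 * t) (-1) * \<chi> (3 * t) (-1))"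
    by (simp add: power2_eq_square mult_ac)
  thus ?thesis
    by (simp add: mult_char_minus_1_squared[OF mult_char_\<chi>] power_mult_distrib)
qed

lemma gauss_quotient_at_multiple_of_t:
  assumes lam: "lam ^ 4 = 1" and "t dvd j" "j < CARD('a) - 1"
  shows "gauss_quotient lam j
    = (if j = t \<or> j = 3 * t then - (of_nat CARD('a) ^ 2) else - of_nat CARD('a))"
proof -
  obtain m where j: "j = t * m" using \<open>t dvd j\<close> ..
  hence "m < 4" using \<open>j < CARD('a) - 1\<close> card_minus_1_eq by simp
  have "(CARD('a) - 1) dvd 4 * j" using j card_minus_1_eq by simp
  moreover have "4 * lam \<noteq> 0" using lam two_nonzero mult_eq_0_iff[of "2::'a" 2] by auto
  ultimately have "gauss_quotient lam j = - (gauss_sum \<zeta> (\<chi> j) ^ 2 * gauss_sum \<zeta> (\<chi> (2 * t + j)) ^ 2)"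
    by (simp add: gauss_quotient_def gauss_sum_\<chi>_trivial \<chi>_trivial)
  moreover have "\<chi> (2 * t + 3 * t) = \<chi> t"
  proof (rule \<chi>_mod)
    have "2 * t + 3 * t = t + 4 * t" by simp
    thus "(2 * t + 3 * t) mod (CARD('a) - 1) = t mod (CARD('a) - 1)" unfolding card_minus_1_eq by simp
  qed
  moreover have "(CARD('a) - 1) dvd 2 * t + 2 * t" using card_minus_1_eq by simp
  moreover have "m = 0 \<or> m = 1 \<or> m = 2 \<or> m = 3" using \<open>m < 4\<close> by auto
  ultimately show ?thesis
    using j t_pos gauss_sum_t_3t gauss_sum_\<phi>_squared gauss_sum_\<chi>_trivial[of 0]
      gauss_sum_\<chi>_trivial[of "2 * t + 2 * t"]
    by (auto simp: mult.commute)
qed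

lemma gauss_quotient_eq:
  assumes "lam ^ 4 = 1" "j < CARD('a) - 1"
  shows "gauss_quotient lam j = of_nat CARD('a) * jacobi_sum (\<chi> (2 * j)) \<phi>
    + (if j = t then of_nat CARD('a) - of_nat CARD('a) ^ 2 else 0)
    + (if j = 3 * t then of_nat CARD('a) - of_nat CARD('a) ^ 2 else 0)"
proof (cases "t dvd j")
  case True
  have "t \<noteq> 3 * t" using t_pos by simp
  thus ?thesis using gauss_quotient_at_multiple_of_t[OF assms(1) True assms(2)]
    by (auto simp: jacobi_sum_at_multiple_of_t True)
next
  case False
  moreover from this have "j \<noteq> t" "j \<noteq> 3 * t" by auto
  ultimately show ?thesis by (simp add: gauss_quotient_generic[OF assms(1)])
qed

lemma one_neq_minus_one: "(1::'a) \<noteq> -1"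
  using two_nonzero by (metis add.right_inverse one_add_one)

lemma \<chi>_double_exponent: "\<chi> (2 * j) x = \<chi> j (x ^ 2)"
  by (simp add: char_pow_def mult_char_power[OF mult_char_T] mult.commute flip: power_mult)

lemma sum_jacobi_sum_\<chi>_\<phi>:
  "(\<Sum>j<CARD('a) - 1. jacobi_sum (\<chi> (2 * j)) \<phi>) = of_nat (CARD('a) - 1) * \<phi> 2"
proof -
  have inner: "(\<Sum>j<CARD('a) - 1. \<chi> j (x ^ 2))
      = (if x = 1 \<or> x = -1 then of_nat (CARD('a) - 1) else 0)" for x :: 'a
    using sum_\<chi>_over_exponents[of "x ^ 2"] by (simp only: power2_eq_1_iff)
  have "(\<Sum>j<CARD('a) - 1. jacobi_sum (\<chi> (2 * j)) \<phi>)
      = (\<Sum>x\<in>UNIV. \<phi> (1 - x) * (\<Sum>j<CARD('a) - 1. \<chi> j (x ^ 2)))"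
    unfolding jacobi_sum_def \<chi>_double_exponent
    by (subst sum.swap) (simp add: sum_distrib_left mult.commute)
  also have "\<dots> = (\<Sum>x::'a\<in>UNIV. (if x = 1 then \<phi> 0 * of_nat (CARD('a) - 1) else 0)
      + (if x = -1 then \<phi> 2 * of_nat (CARD('a) - 1) else 0))"
    unfolding inner by (intro sum.cong refl) (use one_neq_minus_one in \<open>auto simp: one_add_one\<close>)
  finally show ?thesis by (simp add: sum.distrib)
qed

text \<open>With \<open>i = \<alpha>\<^sup>t\<close> a square root of \<open>-1\<close>, \<open>(1 + i)\<^sup>2 = 2 i\<close> shows \<open>\<phi> 2 = \<phi> i = (-1)\<^sup>t\<close>.\<close>

lemma \<phi>_2: "\<phi> 2 = \<chi> t (-1)"
proof -
  define i where "i = \<alpha> ^ t"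
  have i_squared: "i * i = -1" unfolding i_def using \<alpha>_power_2t by (simp add: mult_2 power_add)
  have "1 + i \<noteq> 0"
  proof
    assume "1 + i = 0"
    hence "i * i = 1" by (simp add: add_eq_0_iff)
    thus False using i_squared one_neq_minus_one by simp
  qed
  hence "\<phi> (1 + i) * \<phi> (1 + i) = 1"
    unfolding char_pow_mult using card_minus_1_eq by (intro \<chi>_trivial) simp_all
  moreover have "(1 + i) * (1 + i) = 2 * i" using i_squared by (simp add: algebra_simps)
  ultimately have "\<phi> 2 * \<phi> i = 1" by (simp flip: mult_char_mult[OF mult_char_\<chi>])
  moreover have "\<phi> i = (-1) ^ t" unfolding i_def by (rule \<phi>_\<alpha>_power)
  ultimately have "\<phi> 2 = (-1) ^ t"
    by (metis mult.assoc mult_1_right power_minus1_even power_add mult_2)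
  moreover have "\<chi> t (-1) = (\<omega> ^ (2 * t)) ^ t"
    using \<chi>_\<alpha>_power[of t "2 * t"] \<alpha>_power_2t by (simp add: power_mult)
  ultimately show ?thesis by (simp add: \<omega>_power_2t)
qed

lemma sum_gauss_quotient:
  assumes "lam ^ 4 = 1"
  shows "(\<Sum>j<CARD('a) - 1. gauss_quotient lam j)
    = (of_nat CARD('a) - 1) * (of_nat CARD('a) * \<chi> t (-1) - 2 * of_nat CARD('a))"
proof -
  let ?q = "of_nat CARD('a) :: complex"
  have "t < CARD('a) - 1" "3 * t < CARD('a) - 1" using card_minus_1_eq t_pos by simp_all
  have "(\<Sum>j<CARD('a) - 1. gauss_quotient lam j) = (\<Sum>j<CARD('a) - 1. ?q * jacobi_sum (\<chi> (2 * j)) \<phi>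
      + (if j = t then ?q - ?q ^ 2 else 0) + (if j = 3 * t then ?q - ?q ^ 2 else 0))"
    by (intro sum.cong refl) (simp add: gauss_quotient_eq[OF assms])
  also have "\<dots> = ?q * (\<Sum>j<CARD('a) - 1. jacobi_sum (\<chi> (2 * j)) \<phi>) + 2 * (?q - ?q ^ 2)"
    using \<open>t < CARD('a) - 1\<close> \<open>3 * t < CARD('a) - 1\<close> by (simp add: sum.distrib sum_distrib_left)
  also have "\<dots> = ?q * (of_nat (CARD('a) - 1) * \<chi> t (-1)) + 2 * (?q - ?q ^ 2)"
    unfolding sum_jacobi_sum_\<chi>_\<phi> \<phi>_2 ..
  also have "of_nat (CARD('a) - 1) = ?q - 1" using card_minus_1_pos by (simp add: of_nat_diff)
  finally show ?thesis by (simp add: power2_eq_square algebra_simps)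
qed

end

theorem corollary4p7:
  fixes T :: "'a::{finite,field} \<Rightarrow> complex" and \<zeta> :: complex and lam :: 'a and t :: nat
  assumes "odd CHAR('a)"
    and "CARD('a) mod 4 = 1"
    and "t = (CARD('a) - 1) div 4"
    and "prim_root_unity CHAR('a) \<zeta>"
    and "char_generator T"
    and "lam ^ 4 = 1"
  shows "3 / (of_nat (CARD('a)) - 1) *
      (\<Sum>j=0..CARD('a) - 2.
         gauss_sum \<zeta> (char_pow T j) ^ 2 * gauss_sum \<zeta> (char_pow T (2 * t + j)) ^ 2
           / gauss_sum \<zeta> (char_pow T (4 * j)) * char_pow T (4 * j) (4 * lam))
    = - 6 * of_nat (CARD('a)) + 3 * of_nat (CARD('a)) * char_pow T t (- 1)"
proof -
  interpret quartic_characters T \<zeta> t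
    using assms by unfold_locales
  let ?q = "of_nat CARD('a) :: complex"
  have "{0..CARD('a) - 2} = {..<CARD('a) - 1}" using card_minus_1_pos by auto
  hence sum: "(\<Sum>j=0..CARD('a) - 2. gauss_quotient lam j) = (?q - 1) * (?q * \<chi> t (-1) - 2 * ?q)"
    using sum_gauss_quotient[OF assms(6)] by simp
  have "?q - 1 \<noteq> 0" using card_minus_1_pos by (simp add: of_nat_diff[symmetric])
  hence "3 / (?q - 1) * ((?q - 1) * (?q * \<chi> t (-1) - 2 * ?q)) = 3 * (?q * \<chi> t (-1) - 2 * ?q)"
    by simp
  thus ?thesis unfolding gauss_quotient_def[symmetric] sum by (simp add: algebra_simps)
qed

end
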